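(* The ring $R(T^l)[x_1,\ldots,x_n]/\mathcal I_\lambda$ is generated as an $R(T^l)$-module by $\binom{n}{\lambda}=\frac{n!}{\lambda_1!\cdots\lambda_l!}$ elements, where $\mathcal I_\lambda$ is the ideal generated by \[\sum_{0\le k\le d}(-1)^{d-k}\,e_k(x_{i_1},\ldots,x_{i_s})\,h_{d-k}\big(u_{\phi_\lambda(1)},\ldots,u_{\phi_\lambda(s+1-d)}\big)\] for all $1\le s\le n$, $1\le i_1<\cdots<i_s\le n$, and integers $d\ge s+1-p_{\lambda^\vee}(s)$.
   Context: Fix $n\ge1$ and a partition $\lambda=(\lambda_1\ge\cdots\ge\lambda_l>0)$ of $n$; set $\lambda_j=0$ for $j>l$. $R(T^l)=\mathbb Z[u_1^{\pm1},\ldots,u_l^{\pm1}]$ (Laurent polynomial ring). $\lambda^\vee=(\eta_1,\ldots,\eta_n)$ with $\eta_j=\#\{i:\lambda_i\ge j\}$, and $p_{\lambda^\vee}(s)=\eta_{n-s+1}+\cdots+\eta_n$. $\phi_\lambda:[n]\to[l]$ is such that $(\phi_\lambda(1),\ldots,\phi_\lambda(n))$ is the concatenation, for $r=1,\ldots,l$, of $(1,2,\ldots,r)$ repeated $\lambda_r-\lambda_{r+1}$ times. $e_k$, $h_m$ are elementary and complete homogeneous symmetric polynomials, $e_0=h_0=1$, and $h_m$ of an empty list is $0$ for $m>0$. *)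

theory Defs
  imports Main "HOL-Library.Poly_Mapping" "HOL-Library.FuncSet"
begin

text \<open>Laurent polynomials over the integers in variables u_i (i : nat), represented as the
group ring of the free abelian group of exponent vectors nat =>0 int.  R(T^l) is the subring
of those using only u_1,...,u_l.\<close>
type_synonym laur = "(nat \<Rightarrow>\<^sub>0 int) \<Rightarrow>\<^sub>0 int"

type_synonym mpoly = "(nat \<Rightarrow>\<^sub>0 nat) \<Rightarrow>\<^sub>0 laur"

definition RT :: "nat \<Rightarrow> laur set" where
  "RT l = {r::laur. \<forall>a\<in>Poly_Mapping.keys r. Poly_Mapping.keys a \<subseteq> {1..l}}"

definition Pring :: "nat \<Rightarrow> nat \<Rightarrow> mpoly set" where
  "Pring l n = {p::mpoly. \<forall>m\<in>Poly_Mapping.keys p. Poly_Mapping.keys m \<subseteq> {1..n} \<and> Poly_Mapping.lookup p m \<in> RT l}"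

definition uvar :: "nat \<Rightarrow> laur" where
  "uvar i = Poly_Mapping.single (Poly_Mapping.single i 1) 1"

definition cst :: "laur \<Rightarrow> mpoly" where
  "cst r = Poly_Mapping.single 0 r"

definition xvar :: "nat \<Rightarrow> mpoly" where
  "xvar i = Poly_Mapping.single (Poly_Mapping.single i 1) 1"

definition esym :: "nat \<Rightarrow> nat set \<Rightarrow> mpoly" where
  "esym k S = (\<Sum>T\<in>{T. T \<subseteq> S \<and> card T = k}. \<Prod>i\<in>T. xvar i)"

text \<open>complete homogeneous symmetric polynomial h_m of a list of ring elements
(with repetitions allowed); h_0 = 1, and h_m [] = 0 for m > 0\<close>
definition hsym :: "nat \<Rightarrow> 'a::comm_ring_1 list \<Rightarrow> 'a" where
  "hsym m ys = (\<Sum>f\<in>{f. f \<in> {..<length ys} \<rightarrow>\<^sub>E {..m} \<and> sum f {..<length ys} = m}.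
                   \<Prod>j<length ys. (ys ! j) ^ f j)"

definition is_partition :: "nat list \<Rightarrow> nat \<Rightarrow> bool" where
  "is_partition lam n \<longleftrightarrow> sorted_wrt (\<ge>) lam \<and> (\<forall>x\<in>set lam. 0 < x) \<and> sum_list lam = n"

definition lpart :: "nat list \<Rightarrow> nat \<Rightarrow> nat" where
  "lpart lam j = (if 1 \<le> j \<and> j \<le> length lam then lam ! (j - 1) else 0)"

definition eta :: "nat list \<Rightarrow> nat \<Rightarrow> nat" where
  "eta lam j = card {i\<in>{1..length lam}. lpart lam i \<ge> j}"

definition pdual :: "nat list \<Rightarrow> nat \<Rightarrow> nat \<Rightarrow> nat" where
  "pdual lam n s = (\<Sum>j\<in>{n - s + 1..n}. eta lam j)"

definition phi_list :: "nat list \<Rightarrow> nat list" where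
  "phi_list lam = concat (map (\<lambda>r. concat (replicate (lpart lam r - lpart lam (r + 1)) [1..<r + 1]))
                               [1..<length lam + 1])"

definition phi :: "nat list \<Rightarrow> nat \<Rightarrow> nat" where
  "phi lam j = phi_list lam ! (j - 1)"

definition genpoly :: "nat list \<Rightarrow> nat set \<Rightarrow> int \<Rightarrow> mpoly" where
  "genpoly lam S d = (\<Sum>k\<in>{0..d}. (-1) ^ nat (d - k) * esym (nat k) S *
       cst (hsym (nat (d - k)) (map (\<lambda>j. uvar (phi lam j)) [1..<nat (int (card S) + 1 - d) + 1])))"

definition gens :: "nat list \<Rightarrow> nat \<Rightarrow> mpoly set" where
  "gens lam n = {genpoly lam S d | S d. S \<subseteq> {1..n} \<and> 1 \<le> card S
        \<and> d \<ge> int (card S) + 1 - int (pdual lam n (card S))}"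

definition ideal_gen :: "nat \<Rightarrow> nat \<Rightarrow> mpoly set \<Rightarrow> mpoly set" where
  "ideal_gen l n G = {p. \<exists>(m::nat) c g. (\<forall>j<m. c j \<in> Pring l n \<and> g j \<in> G) \<and> p = (\<Sum>j<m. c j * g j)}"

definition multinom :: "nat \<Rightarrow> nat list \<Rightarrow> nat" where
  "multinom n lam = fact n div (\<Prod>i<length lam. fact (lam ! i))"

end

theory Submission
  imports Defs "HOL-Library.Set_Algebras" "HOL-Library.Multiset"
begin

text \<open>Let T (esym_ideal below) be the ideal generated by the leading forms e_d(S) of the
  generators, filtered by degree. By induction on n, modulo T the polynomials are spanned by
  at most multinom n lam elements. Write a monomial as x_n^e m with m free of x_n and let L be
  the number of nonzero rows of lam. If e \<ge> L, the monomial lies in T because x_n^L does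
  (telescope the identity e_{d+1}(S \<union> {n}) = e_{d+1}(S) + x_n e_d(S)). If e < L, apply
  the induction hypothesis to m for the partition of n - 1 obtained by removing a box from
  row e: multiplying by x_n^e turns each of its leading forms into one for lam, up to
  multiples of x_n^(e+1), which are handled by descending induction on e. The spanning sets
  x_n^e B_e together have at most the sum over e < L of the multinomial coefficients of the
  smaller partitions, which is multinom n lam. Finally, every generator is its leading form plus terms of lower degree,
  so induction on the degree turns a spanning set modulo T into one modulo the ideal itself.\<close>

section \<open>Polynomials with coefficients in R(T^l)\<close>

lemma poly_mapping_sum_single:
  fixes p :: "'a \<Rightarrow>\<^sub>0 'b::comm_monoid_add"
  shows "p = (\<Sum>m\<in>Poly_Mapping.keys p. Poly_Mapping.single m (Poly_Mapping.lookup p m))"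
proof (rule poly_mapping_eqI)
  fix k
  show "Poly_Mapping.lookup p k =
    Poly_Mapping.lookup (\<Sum>m\<in>Poly_Mapping.keys p. Poly_Mapping.single m (Poly_Mapping.lookup p m)) k"
    unfolding lookup_sum lookup_single
    by (cases "k \<in> Poly_Mapping.keys p") (auto simp: in_keys_iff when_def)
qed

lemma lookup_mult_keys:
  fixes p q :: "'a::comm_monoid_add \<Rightarrow>\<^sub>0 'b::comm_ring_1"
  shows "Poly_Mapping.lookup (p * q) k = (\<Sum>a\<in>Poly_Mapping.keys p. \<Sum>b\<in>Poly_Mapping.keys q.
            if k = a + b then Poly_Mapping.lookup p a * Poly_Mapping.lookup q b else 0)"
proof -
  have "p * q = (\<Sum>a\<in>Poly_Mapping.keys p. \<Sum>b\<in>Poly_Mapping.keys q.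
            Poly_Mapping.single a (Poly_Mapping.lookup p a) * Poly_Mapping.single b (Poly_Mapping.lookup q b))"
    by (subst (1 2) poly_mapping_sum_single)
       (simp add: sum_distrib_left sum_distrib_right sum.swap[of _ "Poly_Mapping.keys q"])
  then show ?thesis
    by (simp add: mult_single lookup_sum lookup_single when_def eq_commute)
qed

lemma keys_add_nat:
  fixes a b :: "'a \<Rightarrow>\<^sub>0 nat"
  shows "Poly_Mapping.keys (a + b) = Poly_Mapping.keys a \<union> Poly_Mapping.keys b"
  by (auto simp: in_keys_iff lookup_add)

lemma keys_multE:
  assumes "k \<in> Poly_Mapping.keys (p * q)"
  obtains a b where "k = a + b" "a \<in> Poly_Mapping.keys p" "b \<in> Poly_Mapping.keys q"
  using assms keys_mult[of p q] by blast

definition mon_deg :: "(nat \<Rightarrow>\<^sub>0 nat) \<Rightarrow> nat" where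
  "mon_deg m = sum (Poly_Mapping.lookup m) (Poly_Mapping.keys m)"

definition xmon :: "(nat \<Rightarrow>\<^sub>0 nat) \<Rightarrow> mpoly" where
  "xmon m = Poly_Mapping.single m 1"

definition deg_le :: "nat \<Rightarrow> mpoly set" where
  "deg_le D = {p. \<forall>m\<in>Poly_Mapping.keys p. mon_deg m \<le> D}"

definition deg_less :: "nat \<Rightarrow> mpoly set" where
  "deg_less D = {p. \<forall>m\<in>Poly_Mapping.keys p. mon_deg m < D}"

lemma mon_deg_add [simp]: "mon_deg (a + b) = mon_deg a + mon_deg b"
proof -
  let ?K = "Poly_Mapping.keys a \<union> Poly_Mapping.keys b"
  have *: "mon_deg m = sum (Poly_Mapping.lookup m) ?K" if "Poly_Mapping.keys m \<subseteq> ?K" for m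
    unfolding mon_deg_def by (rule sum.mono_neutral_left) (use that in \<open>auto simp: in_keys_iff\<close>)
  show ?thesis
    by (simp add: *[of "a + b"] *[of a] *[of b] keys_add_nat lookup_add sum.distrib)
qed

lemma mon_deg_0 [simp]: "mon_deg 0 = 0"
  by (simp add: mon_deg_def)

lemma mon_deg_single [simp]: "mon_deg (Poly_Mapping.single i k) = k"
  by (simp add: mon_deg_def)

lemma RT_0 [simp]: "0 \<in> RT l"
  and RT_1 [simp]: "1 \<in> RT l"
  by (simp_all add: RT_def)

lemma RT_add [simp]: "a \<in> RT l \<Longrightarrow> b \<in> RT l \<Longrightarrow> a + b \<in> RT l"
  using keys_add[of a b] by (auto simp: RT_def)

lemma RT_uminus [simp]: "a \<in> RT l \<Longrightarrow> - a \<in> RT l"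
  by (auto simp: RT_def)

lemma RT_mult [simp]: "a \<in> RT l \<Longrightarrow> b \<in> RT l \<Longrightarrow> a * b \<in> RT l"
  by (auto simp: RT_def elim!: keys_multE dest!: set_mp[OF keys_add])

lemma RT_sum [simp]: "(\<And>i. i \<in> A \<Longrightarrow> f i \<in> RT l) \<Longrightarrow> sum f A \<in> RT l"
  by (induction A rule: infinite_finite_induct) auto

lemma RT_prod [simp]: "(\<And>i. i \<in> A \<Longrightarrow> f i \<in> RT l) \<Longrightarrow> prod f A \<in> RT l"
  by (induction A rule: infinite_finite_induct) auto

lemma RT_power [simp]: "a \<in> RT l \<Longrightarrow> a ^ k \<in> RT l"
  by (induction k) auto

lemma uvar_RT: "i \<in> {1..l} \<Longrightarrow> uvar i \<in> RT l"
  by (auto simp: RT_def uvar_def)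

lemma Pring_lookup: "p \<in> Pring l n \<Longrightarrow> Poly_Mapping.lookup p m \<in> RT l"
  by (cases "m \<in> Poly_Mapping.keys p") (auto simp: Pring_def in_keys_iff)

lemma Pring_keys: "p \<in> Pring l n \<Longrightarrow> m \<in> Poly_Mapping.keys p \<Longrightarrow> Poly_Mapping.keys m \<subseteq> {1..n}"
  by (auto simp: Pring_def)

lemma Pring_0 [simp]: "0 \<in> Pring l n"
  and Pring_1 [simp]: "1 \<in> Pring l n"
  by (simp_all add: Pring_def)

lemma Pring_add [simp]: "p \<in> Pring l n \<Longrightarrow> q \<in> Pring l n \<Longrightarrow> p + q \<in> Pring l n"
  using keys_add[of p q] Pring_lookup[of p l n] Pring_lookup[of q l n]
  by (auto simp: Pring_def lookup_add)

lemma Pring_uminus [simp]: "p \<in> Pring l n \<Longrightarrow> - p \<in> Pring l n"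
  by (auto simp: Pring_def)

lemma Pring_mult [simp]:
  assumes "p \<in> Pring l n" "q \<in> Pring l n"
  shows "p * q \<in> Pring l n"
  unfolding Pring_def
proof (intro CollectI ballI conjI)
  fix k assume "k \<in> Poly_Mapping.keys (p * q)"
  then show "Poly_Mapping.keys k \<subseteq> {1..n}"
    by (elim keys_multE) (use assms Pring_keys in \<open>fastforce simp: keys_add_nat\<close>)
  show "Poly_Mapping.lookup (p * q) k \<in> RT l"
    unfolding lookup_mult_keys using assms by (simp add: Pring_lookup)
qed

lemma Pring_sum [simp]: "(\<And>i. i \<in> A \<Longrightarrow> f i \<in> Pring l n) \<Longrightarrow> sum f A \<in> Pring l n"
  by (induction A rule: infinite_finite_induct) auto

lemma Pring_prod [simp]: "(\<And>i. i \<in> A \<Longrightarrow> f i \<in> Pring l n) \<Longrightarrow> prod f A \<in> Pring l n"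
  by (induction A rule: infinite_finite_induct) auto

lemma Pring_power [simp]: "p \<in> Pring l n \<Longrightarrow> p ^ k \<in> Pring l n"
  by (induction k) auto

lemma Pring_cst [simp]: "r \<in> RT l \<Longrightarrow> cst r \<in> Pring l n"
  by (auto simp: Pring_def cst_def)

lemma Pring_xvar [simp]: "i \<in> {1..n} \<Longrightarrow> xvar i \<in> Pring l n"
  by (auto simp: Pring_def xvar_def)

lemma Pring_xmon [simp]: "Poly_Mapping.keys m \<subseteq> {1..n} \<Longrightarrow> xmon m \<in> Pring l n"
  by (auto simp: Pring_def xmon_def)

lemma Pring_mono: "n \<le> n' \<Longrightarrow> p \<in> Pring l n \<Longrightarrow> p \<in> Pring l n'"
  by (fastforce simp: Pring_def)

lemma Pring_0_eq_cst: "p \<in> Pring l 0 \<Longrightarrow> p = cst (Poly_Mapping.lookup p 0)"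
  by (rule poly_mapping_eqI) (auto simp: cst_def lookup_single when_def Pring_def in_keys_iff)

lemma deg_le_zero [simp]: "0 \<in> deg_le D"
  and deg_le_one [simp]: "1 \<in> deg_le D"
  by (simp_all add: deg_le_def mon_deg_def)

lemma deg_le_add [simp]: "p \<in> deg_le D \<Longrightarrow> q \<in> deg_le D \<Longrightarrow> p + q \<in> deg_le D"
  using keys_add[of p q] by (auto simp: deg_le_def)

lemma deg_le_uminus [simp]: "p \<in> deg_le D \<Longrightarrow> - p \<in> deg_le D"
  by (auto simp: deg_le_def)

lemma deg_le_sum: "(\<And>i. i \<in> A \<Longrightarrow> f i \<in> deg_le D) \<Longrightarrow> sum f A \<in> deg_le D"
  by (induction A rule: infinite_finite_induct) auto

lemma deg_le_mult: "p \<in> deg_le D \<Longrightarrow> q \<in> deg_le E \<Longrightarrow> p * q \<in> deg_le (D + E)"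
  by (auto simp: deg_le_def add_mono elim!: keys_multE)

lemma deg_le_mult_deg_less: "p \<in> deg_le D \<Longrightarrow> q \<in> deg_less E \<Longrightarrow> p * q \<in> deg_less (D + E)"
  by (fastforce simp: deg_le_def deg_less_def elim!: keys_multE)

lemma deg_le_prod: "finite A \<Longrightarrow> (\<And>i. i \<in> A \<Longrightarrow> f i \<in> deg_le 1) \<Longrightarrow> prod f A \<in> deg_le (card A)"
proof (induction A rule: finite_induct)
  case (insert x F)
  then show ?case using deg_le_mult[of "f x" 1 "prod f F" "card F"] by simp
qed simp

lemma deg_le_power: "p \<in> deg_le D \<Longrightarrow> p ^ k \<in> deg_le (D * k)"
  by (induction k) (auto dest: deg_le_mult)

lemma deg_le_cst [simp]: "cst r \<in> deg_le D"
  by (auto simp: deg_le_def cst_def)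

lemma deg_le_xvar [simp]: "xvar i \<in> deg_le 1"
  by (auto simp: deg_le_def xvar_def)

lemma deg_le_xmon: "xmon m \<in> deg_le (mon_deg m)"
  by (auto simp: deg_le_def xmon_def)

lemma deg_less_Suc: "deg_less (Suc D) = deg_le D"
  by (auto simp: deg_le_def deg_less_def less_Suc_eq_le)

lemma deg_less_0_eq: "deg_less 0 = {0}"
  by (auto simp: deg_less_def)

lemma deg_less_zero [simp]: "0 \<in> deg_less D"
  by (simp add: deg_less_def)

lemma deg_le_imp_deg_less: "p \<in> deg_le D \<Longrightarrow> D < E \<Longrightarrow> p \<in> deg_less E"
  by (fastforce simp: deg_le_def deg_less_def)

lemma deg_less_add [simp]: "p \<in> deg_less D \<Longrightarrow> q \<in> deg_less D \<Longrightarrow> p + q \<in> deg_less D"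
  using keys_add[of p q] by (auto simp: deg_less_def)

lemma deg_less_uminus [simp]: "p \<in> deg_less D \<Longrightarrow> - p \<in> deg_less D"
  by (auto simp: deg_less_def)

lemma deg_less_sum: "(\<And>i. i \<in> A \<Longrightarrow> f i \<in> deg_less D) \<Longrightarrow> sum f A \<in> deg_less D"
  by (induction A rule: infinite_finite_induct) auto

lemma ex_deg_less: "\<exists>D. p \<in> deg_less D"
  unfolding deg_less_def
  by (rule exI[of _ "Suc (Max (mon_deg ` Poly_Mapping.keys p))"]) (simp add: le_imp_less_Suc)

lemma xmon_mult: "xmon a * xmon b = xmon (a + b)"
  by (simp add: xmon_def mult_single)

lemma xvar_power: "xvar i ^ k = xmon (Poly_Mapping.single i k)"
  by (induction k) (auto simp: xvar_def xmon_def mult_single single_add[symmetric] add.commute)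

lemma cst_add: "cst (a + b) = cst a + cst b"
  by (simp add: cst_def single_add)

lemma cst_mult: "cst (a * b) = cst a * cst b"
  by (simp add: cst_def mult_single)

lemma cst_0 [simp]: "cst 0 = 0"
  and cst_1 [simp]: "cst 1 = 1"
  by (simp_all add: cst_def)

lemma sum_cst_xmon: "p = (\<Sum>m\<in>Poly_Mapping.keys p. cst (Poly_Mapping.lookup p m) * xmon m)"
  by (subst poly_mapping_sum_single) (simp add: cst_def xmon_def mult_single)

section \<open>Elementary symmetric polynomials and the generators\<close>

lemma esym_0 [simp]: "finite S \<Longrightarrow> esym 0 S = 1"
proof -
  assume "finite S"
  then have "{T. T \<subseteq> S \<and> card T = 0} = {{}}"
    using finite_subset by fastforce
  then show ?thesis by (simp add: esym_def)
qed

lemma esym_eq_0: "finite S \<Longrightarrow> card S < d \<Longrightarrow> esym d S = 0"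
proof -
  assume "finite S" "card S < d"
  then have empty: "{T. T \<subseteq> S \<and> card T = d} = {}"
    using card_mono[of S] by (auto simp: not_le[symmetric])
  show ?thesis unfolding esym_def empty by simp
qed

lemma esym_insert:
  assumes "finite S" "x \<notin> S"
  shows "esym (Suc d) (insert x S) = esym (Suc d) S + xvar x * esym d S"
proof -
  let ?A = "{T. T \<subseteq> S \<and> card T = Suc d}"
  let ?B = "{T. T \<subseteq> S \<and> card T = d}"
  have split: "{T. T \<subseteq> insert x S \<and> card T = Suc d} = ?A \<union> insert x ` ?B"
  proof (intro set_eqI iffI)
    fix T assume T: "T \<in> {T. T \<subseteq> insert x S \<and> card T = Suc d}"
    show "T \<in> ?A \<union> insert x ` ?B"
    proof (cases "x \<in> T")
      case True
      then have "T = insert x (T - {x})" "T - {x} \<in> ?B"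
        using T assms by (auto simp: card_Diff_singleton intro: finite_subset)
      then show ?thesis by blast
    qed (use T in auto)
  next
    fix T assume "T \<in> ?A \<union> insert x ` ?B"
    moreover have "card (insert x T') = Suc d" if "T' \<in> ?B" for T'
      using that assms by (metis (mono_tags) card_insert_disjoint finite_subset mem_Collect_eq subsetD)
    ultimately show "T \<in> {T. T \<subseteq> insert x S \<and> card T = Suc d}"
      by auto
  qed
  have inj: "inj_on (insert x) ?B"
  proof (rule inj_onI)
    fix T T' assume "T \<in> ?B" "T' \<in> ?B" "insert x T = insert x T'"
    then show "T = T'" using assms(2) by (metis Diff_insert_absorb mem_Collect_eq subsetD)
  qed
  have "?A \<inter> insert x ` ?B = {}"
    using assms(2) by auto
  then have "esym (Suc d) (insert x S) = (\<Sum>T\<in>?A. \<Prod>i\<in>T. xvar i) + (\<Sum>T\<in>insert x ` ?B. \<Prod>i\<in>T. xvar i)"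
    unfolding esym_def split using assms(1) by (intro sum.union_disjoint) auto
  also have "(\<Sum>T\<in>insert x ` ?B. \<Prod>i\<in>T. xvar i) = (\<Sum>T\<in>?B. \<Prod>i\<in>insert x T. xvar i)"
    by (rule sum.reindex[OF inj, unfolded comp_def])
  also have "(\<Sum>T\<in>?B. \<Prod>i\<in>insert x T. xvar i) = xvar x * esym d S"
    unfolding esym_def sum_distrib_left
  proof (rule sum.cong)
    fix T assume "T \<in> ?B"
    then have "finite T" "x \<notin> T" using assms finite_subset by auto
    then show "(\<Prod>i\<in>insert x T. xvar i) = xvar x * (\<Prod>i\<in>T. xvar i)" by simp
  qed simp
  finally show ?thesis by (simp add: esym_def)
qed

lemma esym_Pring [simp]: "S \<subseteq> {1..n} \<Longrightarrow> esym d S \<in> Pring l n"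
  unfolding esym_def by (intro Pring_sum Pring_prod) auto

lemma esym_deg_le: "finite S \<Longrightarrow> esym d S \<in> deg_le d"
  unfolding esym_def
  by (intro deg_le_sum) (metis (mono_tags, lifting) deg_le_prod deg_le_xvar finite_subset mem_Collect_eq)

lemma hsym_0 [simp]: "hsym 0 ys = 1"
proof -
  have "{f. f \<in> {..<length ys} \<rightarrow>\<^sub>E {..0::nat} \<and> sum f {..<length ys} = 0}
      = {\<lambda>j\<in>{..<length ys}. 0}"
    by (auto simp: PiE_iff extensional_def fun_eq_iff)
  then show ?thesis by (simp add: hsym_def)
qed

lemma hsym_RT: "(\<And>y. y \<in> set ys \<Longrightarrow> y \<in> RT l) \<Longrightarrow> hsym m ys \<in> RT l"
  unfolding hsym_def by (intro RT_sum RT_prod RT_power) auto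

lemma esym_minus_genpoly:
  assumes S: "S \<subseteq> {1..n}"
    and phi: "\<And>j. j \<in> {1..card S + 1 - d} \<Longrightarrow> phi lam j \<in> {1..l}"
  shows "esym d S - genpoly lam S (int d) \<in> Pring l n \<inter> deg_less d"
proof -
  have finS: "finite S" using S finite_subset by blast
  let ?ys = "map (\<lambda>j. uvar (phi lam j)) [1..<nat (int (card S) + 1 - int d) + 1]"
  let ?t = "\<lambda>k. (-1) ^ nat (int d - k) * esym (nat k) S * cst (hsym (nat (int d - k)) ?ys)"
  have "{0..int d} = insert (int d) {0..<int d}"
    by auto
  then have "genpoly lam S (int d) = ?t (int d) + (\<Sum>k\<in>{0..<int d}. ?t k)"
    unfolding genpoly_def by simp
  then have eq: "esym d S - genpoly lam S (int d) = - (\<Sum>k\<in>{0..<int d}. ?t k)"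
    using finS by simp
  have ys: "hsym i ?ys \<in> RT l" for i
    by (rule hsym_RT) (use phi in \<open>auto intro!: uvar_RT\<close>)
  have "?t k \<in> Pring l n \<inter> deg_less d" if k: "k \<in> {0..<int d}" for k
  proof
    show "?t k \<in> Pring l n" using S ys by simp
    have "?t k \<in> deg_le (0 + nat k + 0)"
      by (intro deg_le_mult esym_deg_le finS deg_le_cst) (use deg_le_power[of "-1" 0] in simp)
    moreover have "nat k < d" using k by auto
    ultimately show "?t k \<in> deg_less d"
      by (simp add: deg_le_imp_deg_less)
  qed
  then have "(\<Sum>k\<in>{0..<int d}. ?t k) \<in> Pring l n \<inter> deg_less d"
    by (intro IntI Pring_sum deg_less_sum) blast+
  then show ?thesis
    unfolding eq by (blast intro: Pring_uminus deg_less_uminus)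
qed

section \<open>Partitions\<close>

lemma eta_eq_card: "eta lam t = card {i. i < length lam \<and> t \<le> lam ! i}"
proof -
  have "{i\<in>{1..length lam}. t \<le> lpart lam i} = Suc ` {i. i < length lam \<and> t \<le> lam ! i}"
  proof (intro set_eqI iffI)
    fix x assume "x \<in> {i\<in>{1..length lam}. t \<le> lpart lam i}"
    then have "x - 1 \<in> {i. i < length lam \<and> t \<le> lam ! i}" "x = Suc (x - 1)"
      by (auto simp: lpart_def)
    then show "x \<in> Suc ` {i. i < length lam \<and> t \<le> lam ! i}" by blast
  qed (auto simp: lpart_def)
  then show ?thesis
    unfolding eta_def by (simp add: card_image)
qed

lemma eta_mset: "eta lam t = size (filter_mset ((\<le>) t) (mset lam))"
  by (simp add: eta_eq_card length_filter_conv_card[symmetric] mset_filter[symmetric] del: mset_filter)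

lemma eta_Nil [simp]: "eta [] t = 0"
  and eta_Cons [simp]: "eta (x # xs) t = (if t \<le> x then 1 else 0) + eta xs t"
  by (simp_all add: eta_mset)

lemma sum_eta:
  "(\<And>x. x \<in> set lam \<Longrightarrow> x \<le> N) \<Longrightarrow> (\<Sum>t\<in>{1..N}. eta lam t) = sum_list lam"
proof (induction lam)
  case (Cons x xs)
  have "{1..N} \<inter> {t. t \<le> x} = {1..x}"
    using Cons.prems[of x] by auto
  then show ?case
    using Cons by (simp add: sum.distrib sum.If_cases)
qed simp

lemma eta_eq_0: "sum_list lam < t \<Longrightarrow> eta lam t = 0"
  by (induction lam) auto

lemma eta_le_index:
  assumes "sorted_wrt (\<ge>) lam" "k < length lam" "lam ! k < t"
  shows "eta lam t \<le> k"
proof -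
  have "{i. i < length lam \<and> t \<le> lam ! i} \<subseteq> {..<k}"
  proof
    fix i assume i: "i \<in> {i. i < length lam \<and> t \<le> lam ! i}"
    show "i \<in> {..<k}"
    proof (rule ccontr)
      assume "i \<notin> {..<k}"
      then have "lam ! i \<le> lam ! k"
        using sorted_wrt_nth_less[OF assms(1), of k i] i by (cases "k = i") auto
      then show False using i assms(3) by simp
    qed
  qed
  then show ?thesis
    unfolding eta_eq_card using card_mono[of "{..<k}"] by fastforce
qed

lemma downward_closed_eq_lessThan:
  fixes A :: "nat set"
  assumes "finite A" "\<And>i j. i \<in> A \<Longrightarrow> j < i \<Longrightarrow> j \<in> A"
  shows "A = {..<card A}"
proof (cases "A = {}")
  case False
  have "A = {..Max A}"
  proof (intro set_eqI iffI)
    fix x assume "x \<in> {..Max A}"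
    then have "x = Max A \<or> x < Max A" by auto
    then show "x \<in> A" using Max_in[OF assms(1) False] assms(2) by auto
  qed (use assms(1) in simp)
  then show ?thesis by (metis card_atMost lessThan_Suc_atMost)
qed simp

lemma nonzero_rows:
  assumes "sorted_wrt (\<ge>) lam"
  shows "{k. k < length lam \<and> 0 < lam ! k} = {..<eta lam 1}"
proof -
  have "{k. k < length lam \<and> 0 < lam ! k} = {..<card {k. k < length lam \<and> 0 < lam ! k}}"
  proof (rule downward_closed_eq_lessThan)
    fix i j assume "i \<in> {k. k < length lam \<and> 0 < lam ! k}" "j < i"
    then show "j \<in> {k. k < length lam \<and> 0 < lam ! k}"
      using sorted_wrt_nth_less[OF assms, of j i] by auto
  qed simp
  then show ?thesis
    by (simp add: eta_eq_card Suc_le_eq)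
qed

lemma nonzero_rowsD:
  "sorted_wrt (\<ge>) lam \<Longrightarrow> k < eta lam 1 \<Longrightarrow> k < length lam \<and> 0 < lam ! k"
  using nonzero_rows[of lam] by blast

lemma sum_nonzero_rows:
  assumes "sorted_wrt (\<ge>) lam"
  shows "(\<Sum>k<eta lam 1. lam ! k) = sum_list lam"
proof -
  have "sum_list lam = (\<Sum>k<length lam. lam ! k)"
    by (simp add: sum_list_sum_nth atLeast0LessThan)
  also have "\<dots> = (\<Sum>k\<in>{k. k < length lam \<and> 0 < lam ! k}. lam ! k)"
    by (rule sum.mono_neutral_right) auto
  finally show ?thesis
    by (simp add: nonzero_rows[OF assms])
qed

lemma pdual_self: "sum_list lam = n \<Longrightarrow> pdual lam n n = n"
  unfolding pdual_def using sum_eta[of lam n] member_le_sum_list[of _ lam] by simp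

lemma pdual_le: "sum_list lam = n \<Longrightarrow> pdual lam n s \<le> n"
  using sum_mono2[of "{1..n}" "{n - s + 1..n}" "eta lam"] pdual_self[of lam n]
  by (simp add: pdual_def)

lemma pdual_Suc: "s < n \<Longrightarrow> pdual lam n (Suc s) = eta lam (n - s) + pdual lam n s"
proof -
  assume "s < n"
  then have "{n - Suc s + 1..n} = insert (n - s) {n - s + 1..n}"
    by auto
  then show ?thesis
    unfolding pdual_def by simp
qed

lemma pdual_pred:
  assumes "sum_list lam = n" "1 \<le> n"
  shows "pdual lam n (n - 1) + eta lam 1 = n"
  using pdual_Suc[of "n - 1" n lam] pdual_self[OF assms(1)] assms(2) by simp

text \<open>Lowering row k by one and re-sorting removes a corner box of the Young diagram,
  namely the last box of the last row of length lam ! k.\<close>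
definition remove_box :: "nat list \<Rightarrow> nat \<Rightarrow> nat list" where
  "remove_box lam k = rev (sort (lam[k := lam ! k - 1]))"

lemma length_remove_box [simp]: "length (remove_box lam k) = length lam"
  by (simp add: remove_box_def)

lemma sorted_remove_box: "sorted_wrt (\<ge>) (remove_box lam k)"
  using sorted_sort[of "lam[k := lam ! k - 1]"] by (simp add: remove_box_def sorted_wrt_rev)

lemma mset_remove_box:
  "k < length lam \<Longrightarrow> mset (remove_box lam k) = add_mset (lam ! k - 1) (mset lam - {#lam ! k#})"
  by (simp add: remove_box_def mset_update)

lemma mset_remove_nth:
  "k < length lam \<Longrightarrow> mset lam = add_mset (lam ! k) (mset lam - {#lam ! k#})"
  by (simp add: insert_DiffM)

lemma sum_list_remove_box:
  assumes "k < length lam" "0 < lam ! k"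
  shows "sum_list (remove_box lam k) + 1 = sum_list lam"
proof -
  let ?M = "mset lam - {#lam ! k#}"
  have "sum_list lam = lam ! k + sum_mset ?M"
    by (subst (1) sum_mset_sum_list[symmetric], subst mset_remove_nth[OF assms(1)]) simp
  moreover have "sum_list (remove_box lam k) = (lam ! k - 1) + sum_mset ?M"
    by (subst sum_mset_sum_list[symmetric], subst mset_remove_box[OF assms(1)]) simp
  ultimately show ?thesis
    using assms(2) by simp
qed

lemma eta_remove_box:
  assumes "k < length lam" "1 \<le> t"
  shows "eta (remove_box lam k) t + (if t = lam ! k then 1 else 0) = eta lam t"
proof -
  let ?F = "size (filter_mset ((\<le>) t) (mset lam - {#lam ! k#}))"
  have "eta lam t = (if t \<le> lam ! k then 1 else 0) + ?F"
    unfolding eta_mset by (subst mset_remove_nth[OF assms(1)]) simp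
  moreover have "eta (remove_box lam k) t = (if t \<le> lam ! k - 1 then 1 else 0) + ?F"
    unfolding eta_mset by (subst mset_remove_box[OF assms(1)]) simp
  ultimately show ?thesis
    using assms(2) by auto
qed

definition fact_prod :: "nat list \<Rightarrow> nat" where
  "fact_prod lam = prod_mset (image_mset fact (mset lam))"

lemma multinom_eq_div: "multinom n lam = fact n div fact_prod lam"
proof -
  have "(\<Prod>i<length xs. fact (xs ! i)) = fact_prod xs" for xs :: "nat list"
    by (induction xs) (simp_all add: fact_prod_def prod.lessThan_Suc_shift del: prod.lessThan_Suc)
  then show ?thesis
    by (simp add: multinom_def)
qed

lemma fact_prod_dvd: "fact_prod lam dvd fact (sum_list lam)"
proof (induction lam)
  case (Cons x xs)
  then have "fact x * fact_prod xs dvd fact x * fact (sum_list xs)"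
    by simp
  also have "\<dots> dvd fact (x + sum_list xs)"
    by (rule fact_fact_dvd_fact)
  finally show ?case
    by (simp add: fact_prod_def)
qed (simp add: fact_prod_def)

lemma multinom_mult_fact_prod: "sum_list lam = n \<Longrightarrow> multinom n lam * fact_prod lam = fact n"
  using fact_prod_dvd[of lam] by (simp add: multinom_eq_div)

lemma fact_prod_remove_box:
  assumes "k < length lam" "0 < lam ! k"
  shows "fact_prod (remove_box lam k) * lam ! k = fact_prod lam"
proof -
  let ?P = "prod_mset (image_mset fact (mset lam - {#lam ! k#})) :: nat"
  have "fact_prod lam = fact (lam ! k) * ?P"
    unfolding fact_prod_def by (subst mset_remove_nth[OF assms(1)]) simp
  moreover have "fact_prod (remove_box lam k) = fact (lam ! k - 1) * ?P"
    unfolding fact_prod_def by (subst mset_remove_box[OF assms(1)]) simp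
  moreover have "fact (lam ! k) = lam ! k * (fact (lam ! k - 1) :: nat)"
    using assms(2) fact_reduce[of "lam ! k", where 'a = nat] by simp
  ultimately show ?thesis
    by simp
qed

lemma sum_multinom_remove_box:
  assumes "sorted_wrt (\<ge>) lam" "sum_list lam = n" "1 \<le> n"
  shows "(\<Sum>k<eta lam 1. multinom (n - 1) (remove_box lam k)) = multinom n lam"
proof -
  have rows: "k < length lam \<and> 0 < lam ! k" if "k < eta lam 1" for k
    using nonzero_rowsD[OF assms(1) that] .
  have "(\<Sum>k<eta lam 1. multinom (n - 1) (remove_box lam k)) * fact_prod lam
      = (\<Sum>k<eta lam 1. multinom (n - 1) (remove_box lam k) * fact_prod (remove_box lam k) * lam ! k)"
    unfolding sum_distrib_right by (intro sum.cong) (auto simp: mult.assoc fact_prod_remove_box rows)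
  also have "\<dots> = (\<Sum>k<eta lam 1. fact (n - 1) * lam ! k)"
  proof (intro sum.cong refl)
    fix k assume "k \<in> {..<eta lam 1}"
    then have "sum_list (remove_box lam k) = n - 1"
      using rows sum_list_remove_box assms(2) by fastforce
    then show "multinom (n - 1) (remove_box lam k) * fact_prod (remove_box lam k) * lam ! k
        = fact (n - 1) * lam ! k"
      by (simp add: multinom_mult_fact_prod)
  qed
  also have "\<dots> = fact (n - 1) * n"
    using sum_nonzero_rows[OF assms(1)] assms(2) by (simp flip: sum_distrib_left)
  also have "\<dots> = fact n"
    using assms(3) fact_reduce[of n, where 'a = nat] by simp
  also have "\<dots> = multinom n lam * fact_prod lam"
    using multinom_mult_fact_prod[OF assms(2)] by simp
  finally show ?thesis
    by (simp add: fact_prod_def image_iff)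
qed

lemma pdual_remove_box:
  assumes k: "k < length lam" "0 < lam ! k" and n: "sum_list lam = n"
    and s: "1 \<le> s" "s \<le> n - 1"
  shows "pdual (remove_box lam k) (n - 1) s + (if n - s \<le> lam ! k then 1 else 0) = pdual lam n (Suc s)"
proof -
  let ?lam' = "remove_box lam k"
  have "lam ! k \<le> n"
    using elem_le_sum_list[OF k(1)] n by simp
  then have box: "(\<Sum>t\<in>{n - s..n}. if t = lam ! k then 1 else 0) = (if n - s \<le> lam ! k then 1 else 0 :: nat)"
    by (simp add: sum.delta')
  have "eta ?lam' n = 0"
    using sum_list_remove_box[OF k] n by (intro eta_eq_0) simp
  moreover have "{n - s..n} = insert n {n - 1 - s + 1..n - 1}"
    using s by auto
  moreover have "n \<notin> {n - 1 - s + 1..n - 1}"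
    using s by auto
  ultimately have "pdual ?lam' (n - 1) s = (\<Sum>t\<in>{n - s..n}. eta ?lam' t)"
    unfolding pdual_def by simp
  moreover have "pdual lam n (Suc s) = (\<Sum>t\<in>{n - s..n}. eta ?lam' t + (if t = lam ! k then 1 else 0))"
    unfolding pdual_def
  proof (rule sum.cong)
    show "{n - Suc s + 1..n} = {n - s..n}"
      using s by auto
    fix t assume "t \<in> {n - s..n}"
    then have "1 \<le> t"
      using s by auto
    then show "eta lam t = eta ?lam' t + (if t = lam ! k then 1 else 0)"
      using eta_remove_box[OF k(1)] by metis
  qed
  ultimately show ?thesis
    by (simp add: sum.distrib box)
qed

lemma lpart_Suc_le: "sorted_wrt (\<ge>) lam \<Longrightarrow> 1 \<le> r \<Longrightarrow> lpart lam (Suc r) \<le> lpart lam r"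
  unfolding lpart_def using sorted_wrt_nth_less[of "(\<ge>)" lam "r - 1" r]
  by (auto simp: Suc_le_eq)

lemma summation_by_parts_nat:
  fixes f :: "nat \<Rightarrow> nat"
  assumes "\<And>r. 1 \<le> r \<Longrightarrow> f (Suc r) \<le> f r"
  shows "(\<Sum>r\<in>{1..m}. r * (f r - f (Suc r))) + m * f (Suc m) = (\<Sum>r\<in>{1..m}. f r)"
proof (induction m)
  case (Suc m)
  have "Suc m * (f (Suc m) - f (Suc (Suc m))) + Suc m * f (Suc (Suc m)) = Suc m * f (Suc m)"
    using assms[of "Suc m"] by (metis add_mult_distrib2 le_add1 le_add_diff_inverse2 plus_1_eq_Suc)
  then show ?case
    using Suc by (simp add: add.assoc)
qed simp

lemma length_phi_list:
  assumes "sorted_wrt (\<ge>) lam"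
  shows "length (phi_list lam) = sum_list lam"
proof -
  let ?f = "lpart lam"
  have "length (phi_list lam) = (\<Sum>r\<leftarrow>[1..<length lam + 1]. (?f r - ?f (r + 1)) * r)"
    unfolding phi_list_def length_concat map_map
    by (simp add: o_def sum_list_replicate length_concat del: upt_Suc)
  also have "\<dots> = (\<Sum>r\<in>{1..length lam}. r * (?f r - ?f (Suc r)))"
    by (simp add: sum_set_upt_conv_sum_list_nat[symmetric] atLeastLessThanSuc_atLeastAtMost mult.commute
        del: upt_Suc)
  also have "\<dots> = (\<Sum>r\<in>{1..length lam}. ?f r)"
    using summation_by_parts_nat[of ?f "length lam"] lpart_Suc_le[OF assms] by (simp add: lpart_def)
  also have "\<dots> = (\<Sum>i<length lam. lam ! i)"
    using sum.atLeast1_atMost_eq[of ?f "length lam"] by (simp add: lpart_def)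
  finally show ?thesis
    by (simp add: sum_list_sum_nth atLeast0LessThan)
qed

lemma phi_range:
  assumes "sorted_wrt (\<ge>) lam" "sum_list lam = n" "j \<in> {1..n}"
  shows "phi lam j \<in> {1..length lam}"
proof -
  have "phi lam j \<in> set (phi_list lam)"
    unfolding phi_def using assms length_phi_list[OF assms(1)] by (intro nth_mem) auto
  also have "set (phi_list lam) \<subseteq> {1..length lam}"
    by (auto simp: phi_list_def)
  finally show ?thesis .
qed

section \<open>The leading-form ideal\<close>

definition gen_index :: "nat list \<Rightarrow> nat \<Rightarrow> nat set \<Rightarrow> nat \<Rightarrow> bool" where
  "gen_index lam n S d \<longleftrightarrow>
     S \<subseteq> {1..n} \<and> 1 \<le> card S \<and> int (card S) + 1 - int (pdual lam n (card S)) \<le> int d"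

lemma genpoly_in_gens: "gen_index lam n S d \<Longrightarrow> genpoly lam S (int d) \<in> gens lam n"
  unfolding gen_index_def gens_def by blast

lemma gen_index_esym_minus_genpoly:
  assumes "sorted_wrt (\<ge>) lam" "sum_list lam = n" "gen_index lam n S d"
  shows "esym d S - genpoly lam S (int d) \<in> Pring (length lam) n \<inter> deg_less d"
proof (rule esym_minus_genpoly)
  show "S \<subseteq> {1..n}"
    using assms(3) by (simp add: gen_index_def)
  fix j assume "j \<in> {1..card S + 1 - d}"
  moreover have "card S + 1 - d \<le> n"
    using assms(3) pdual_le[OF assms(2), of "card S"] unfolding gen_index_def by linarith
  ultimately show "phi lam j \<in> {1..length lam}"
    using phi_range[OF assms(1,2)] by simp
qed

text \<open>The degree bound D is kept so that the passage to the ideal itself can proceed by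
  induction on the degree.\<close>
inductive_set esym_ideal :: "nat list \<Rightarrow> nat \<Rightarrow> nat \<Rightarrow> mpoly set" for lam n D where
  zero [simp]: "0 \<in> esym_ideal lam n D"
| gen: "c \<in> Pring (length lam) n \<Longrightarrow> c \<in> deg_le (D - d) \<Longrightarrow> d \<le> D \<Longrightarrow> gen_index lam n S d
    \<Longrightarrow> t \<in> esym_ideal lam n D \<Longrightarrow> c * esym d S + t \<in> esym_ideal lam n D"

lemma esym_ideal_add:
  "p \<in> esym_ideal lam n D \<Longrightarrow> q \<in> esym_ideal lam n D \<Longrightarrow> p + q \<in> esym_ideal lam n D"
  by (induction rule: esym_ideal.induct) (auto simp: add.assoc intro: esym_ideal.gen)

lemma esym_ideal_mult:
  assumes "q \<in> Pring (length lam) n" "q \<in> deg_le a"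
  shows "t \<in> esym_ideal lam n D \<Longrightarrow> q * t \<in> esym_ideal lam n (D + a)"
proof (induction rule: esym_ideal.induct)
  case (gen c d S t)
  have "q * c \<in> deg_le (D + a - d)"
    using deg_le_mult[OF assms(2) gen.hyps(2)] gen.hyps(3) by (simp add: add.commute)
  then have "(q * c) * esym d S + q * t \<in> esym_ideal lam n (D + a)"
    using gen assms(1) by (intro esym_ideal.gen) auto
  then show ?case
    by (simp add: algebra_simps)
qed simp

lemma esym_ideal_mono: "t \<in> esym_ideal lam n D \<Longrightarrow> D \<le> D' \<Longrightarrow> t \<in> esym_ideal lam n D'"
  using esym_ideal_mult[of 1 lam n "D' - D" t D] by simp

lemma esym_ideal_cst_mult:
  "r \<in> RT (length lam) \<Longrightarrow> t \<in> esym_ideal lam n D \<Longrightarrow> cst r * t \<in> esym_ideal lam n D"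
  using esym_ideal_mult[of "cst r" lam n 0 t D] by simp

lemma esym_in_esym_ideal: "gen_index lam n S d \<Longrightarrow> esym d S \<in> esym_ideal lam n d"
  using esym_ideal.gen[of 1 lam n d d S 0] by simp

lemma sign_esym_in_esym_ideal:
  "gen_index lam n S d \<Longrightarrow> (-1) ^ k * esym d S \<in> esym_ideal lam n d"
  using esym_ideal_mult[OF _ _ esym_in_esym_ideal, of "(-1) ^ k" lam n 0 S d]
    deg_le_power[of "-1" 0 k] by simp

section \<open>Spanning sets modulo the leading-form ideal\<close>

inductive_set RT_span :: "nat \<Rightarrow> mpoly set \<Rightarrow> mpoly set" for l B where
  zero [simp]: "0 \<in> RT_span l B"
| add: "r \<in> RT l \<Longrightarrow> b \<in> B \<Longrightarrow> p \<in> RT_span l B \<Longrightarrow> cst r * b + p \<in> RT_span l B"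

lemma RT_span_add: "p \<in> RT_span l B \<Longrightarrow> q \<in> RT_span l B \<Longrightarrow> p + q \<in> RT_span l B"
  by (induction rule: RT_span.induct) (auto simp: add.assoc intro: RT_span.add)

lemma RT_span_cst_mult:
  assumes "r \<in> RT l"
  shows "p \<in> RT_span l B \<Longrightarrow> cst r * p \<in> RT_span l B"
proof (induction rule: RT_span.induct)
  case (add r' b p)
  then have "cst (r * r') * b + cst r * p \<in> RT_span l B"
    using assms by (intro RT_span.add) auto
  then show ?case
    by (simp add: cst_mult algebra_simps)
qed simp

lemma RT_span_mono: "p \<in> RT_span l B \<Longrightarrow> B \<subseteq> B' \<Longrightarrow> p \<in> RT_span l B'"
  by (induction rule: RT_span.induct) (auto intro: RT_span.add)

lemma RT_span_mult_image: "p \<in> RT_span l B \<Longrightarrow> q * p \<in> RT_span l ((*) q ` B)"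
proof (induction rule: RT_span.induct)
  case (add r b p)
  then have "cst r * (q * b) + q * p \<in> RT_span l ((*) q ` B)"
    by (intro RT_span.add) auto
  then show ?case
    by (simp add: algebra_simps)
qed simp

lemma RT_span_eq_sum:
  assumes "finite B"
  shows "p \<in> RT_span l B \<Longrightarrow> \<exists>r. (\<forall>b\<in>B. r b \<in> RT l) \<and> p = (\<Sum>b\<in>B. cst (r b) * b)"
proof (induction rule: RT_span.induct)
  case zero
  show ?case
    by (intro exI[of _ "\<lambda>_. 0"]) simp
next
  case (add r0 b0 p)
  then obtain r where r: "\<forall>b\<in>B. r b \<in> RT l" "p = (\<Sum>b\<in>B. cst (r b) * b)"
    by blast
  define r' where "r' = r(b0 := r0 + r b0)"
  have "(\<Sum>b\<in>B - {b0}. cst (r' b) * b) = (\<Sum>b\<in>B - {b0}. cst (r b) * b)"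
    by (rule sum.cong) (auto simp: r'_def)
  then have "(\<Sum>b\<in>B. cst (r' b) * b) = cst r0 * b0 + (\<Sum>b\<in>B. cst (r b) * b)"
    using add.hyps(2) assms by (simp add: sum.remove[of B b0] r'_def cst_add algebra_simps)
  then show ?case
    using add.hyps(1) r by (intro exI[of _ r']) (auto simp: r'_def)
qed

definition RT_module :: "nat \<Rightarrow> mpoly set \<Rightarrow> bool" where
  "RT_module l X \<longleftrightarrow> 0 \<in> X \<and> (\<forall>p\<in>X. \<forall>q\<in>X. p + q \<in> X) \<and> (\<forall>r\<in>RT l. \<forall>p\<in>X. cst r * p \<in> X)"

lemma RT_module_RT_span: "RT_module l (RT_span l B)"
  by (simp add: RT_module_def RT_span_add RT_span_cst_mult)

lemma RT_module_esym_ideal: "RT_module (length lam) (esym_ideal lam n D)"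
  by (simp add: RT_module_def esym_ideal_add esym_ideal_cst_mult)

lemma RT_module_set_plus:
  assumes "RT_module l X" "RT_module l Y"
  shows "RT_module l (X + Y)"
  unfolding RT_module_def
proof (intro conjI ballI)
  show "0 \<in> X + Y"
    using assms set_plus_intro[of 0 X 0 Y] by (simp add: RT_module_def)
next
  fix p q assume "p \<in> X + Y" "q \<in> X + Y"
  then obtain x y x' y' where "p = x + y" "q = x' + y'" "x \<in> X" "y \<in> Y" "x' \<in> X" "y' \<in> Y"
    by (auto elim!: set_plus_elim)
  then show "p + q \<in> X + Y"
    using assms set_plus_intro[of "x + x'" X "y + y'" Y] by (simp add: RT_module_def algebra_simps)
next
  fix r p assume "r \<in> RT l" "p \<in> X + Y"
  then obtain x y where "p = x + y" "x \<in> X" "y \<in> Y"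
    by (auto elim!: set_plus_elim)
  then show "cst r * p \<in> X + Y"
    using assms \<open>r \<in> RT l\<close> set_plus_intro[of "cst r * x" X "cst r * y" Y]
    by (simp add: RT_module_def distrib_left)
qed

lemma RT_module_sum:
  "RT_module l X \<Longrightarrow> (\<And>i. i \<in> A \<Longrightarrow> f i \<in> X) \<Longrightarrow> sum f A \<in> X"
  by (induction A rule: infinite_finite_induct) (auto simp: RT_module_def)

lemma RT_module_mult:
  assumes "RT_module l X" "q \<in> Pring l n" "\<And>m. m \<in> Poly_Mapping.keys q \<Longrightarrow> xmon m * f \<in> X"
  shows "q * f \<in> X"
proof -
  have "q * f = (\<Sum>m\<in>Poly_Mapping.keys q. cst (Poly_Mapping.lookup q m) * (xmon m * f))"
    by (subst sum_cst_xmon) (simp add: sum_distrib_right mult.assoc)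
  also have "\<dots> \<in> X"
    using assms by (intro RT_module_sum) (auto simp: RT_module_def Pring_lookup)
  finally show ?thesis .
qed

lemma esym_ideal_telescope:
  assumes n: "1 \<le> n" and S: "finite S" "n \<notin> S"
    and gens: "\<And>j. j \<in> {1..k} \<Longrightarrow> gen_index lam n (insert n S) (d + j)"
  shows "xvar n ^ k * esym d S - (-1) ^ k * esym (d + k) S \<in> esym_ideal lam n (d + k)"
  using gens
proof (induction k)
  case (Suc k)
  let ?x = "xvar n"
  have "?x * (?x ^ k * esym d S - (-1) ^ k * esym (d + k) S) \<in> esym_ideal lam n (d + k + 1)"
    using Suc n deg_le_xvar[of n] by (intro esym_ideal_mult) auto
  moreover have "(-1) ^ k * esym (Suc (d + k)) (insert n S) \<in> esym_ideal lam n (d + k + 1)"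
    using Suc.prems[of "Suc k"] by (simp add: sign_esym_in_esym_ideal)
  ultimately have "?x * (?x ^ k * esym d S - (-1) ^ k * esym (d + k) S)
      + (-1) ^ k * esym (Suc (d + k)) (insert n S) \<in> esym_ideal lam n (d + Suc k)"
    by (simp add: esym_ideal_add)
  then show ?case
    by (simp add: esym_insert[OF S] algebra_simps)
qed simp

lemma eta_1_pos: "0 < sum_list lam \<Longrightarrow> 0 < eta lam 1"
  by (induction lam) auto

lemma xvar_power_in_esym_ideal:
  assumes "sum_list lam = n" "1 \<le> n"
  shows "xvar n ^ eta lam 1 \<in> esym_ideal lam n (eta lam 1)"
proof -
  let ?L = "eta lam 1" and ?S = "{1..n - 1}"
  have "xvar n ^ ?L * esym 0 ?S - (-1) ^ ?L * esym (0 + ?L) ?S \<in> esym_ideal lam n (0 + ?L)"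
    using assms
    by (intro esym_ideal_telescope) (auto simp: gen_index_def pdual_self)
  moreover have "(-1) ^ ?L * esym ?L ?S \<in> esym_ideal lam n ?L"
  proof (cases "n = 1")
    case True
    then show ?thesis
      using eta_1_pos[of lam] assms by (simp add: esym_eq_0)
  next
    case False
    then have "gen_index lam n ?S ?L"
      using assms(2) pdual_pred[OF assms] unfolding gen_index_def by auto
    then show ?thesis
      by (rule sign_esym_in_esym_ideal)
  qed
  ultimately show ?thesis
    using esym_ideal_add by fastforce
qed

lemma gen_index_pred:
  assumes "gen_index lam (n - 1) S d"
  shows "finite S" "n \<notin> S" "S \<subseteq> {1..n}" "1 \<le> card S" "card S \<le> n - 1"
proof -
  have S: "S \<subseteq> {1..n - 1}" "1 \<le> card S"
    using assms by (auto simp: gen_index_def)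
  then show "finite S" "1 \<le> card S"
    by (auto intro: card_ge_0_finite)
  show "card S \<le> n - 1"
    using card_mono[OF _ S(1)] by simp
  show "S \<subseteq> {1..n}"
    using S(1) by (force simp: subset_iff)
  show "n \<notin> S"
  proof
    assume "n \<in> S"
    then have "n \<in> {1..n - 1}"
      using S(1) by blast
    then show False
      by auto
  qed
qed

lemma gen_index_remove_box_insert:
  assumes k: "k < length lam" "0 < lam ! k" and n: "sum_list lam = n"
    and g: "gen_index (remove_box lam k) (n - 1) S d" and le: "n - card S \<le> lam ! k"
  shows "gen_index lam n (insert n S) d"
proof -
  note S = gen_index_pred[OF g]
  have d: "int (card S) + 1 - int (pdual (remove_box lam k) (n - 1) (card S)) \<le> int d"
    using g by (simp add: gen_index_def)
  have "pdual (remove_box lam k) (n - 1) (card S) + 1 = pdual lam n (Suc (card S))"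
    using pdual_remove_box[OF k n S(4,5)] le by simp
  then show ?thesis
    using S d unfolding gen_index_def by auto
qed

lemma gen_index_remove_box_shift:
  assumes sorted: "sorted_wrt (\<ge>) lam" and k: "k < length lam" "0 < lam ! k" and n: "sum_list lam = n"
    and g: "gen_index (remove_box lam k) (n - 1) S d" and less: "lam ! k < n - card S"
  shows "gen_index lam n S (d + k)" and "\<And>j. 1 \<le> j \<Longrightarrow> gen_index lam n (insert n S) (d + j)"
proof -
  note S = gen_index_pred[OF g]
  have d: "int (card S) + 1 - int (pdual (remove_box lam k) (n - 1) (card S)) \<le> int d"
    using g by (simp add: gen_index_def)
  have P: "pdual (remove_box lam k) (n - 1) (card S) = pdual lam n (Suc (card S))"
    using pdual_remove_box[OF k n S(4,5)] less by simp
  have "eta lam (n - card S) \<le> k"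
    by (rule eta_le_index[OF sorted k(1) less])
  moreover have "pdual lam n (Suc (card S)) = eta lam (n - card S) + pdual lam n (card S)"
    using S(4,5) by (intro pdual_Suc) simp
  ultimately show "gen_index lam n S (d + k)"
    using S d P unfolding gen_index_def by auto
  show "gen_index lam n (insert n S) (d + j)" if "1 \<le> j" for j
    using S d P that unfolding gen_index_def by auto
qed

lemma xvar_power_esym_remove_box:
  assumes n: "1 \<le> n" and sorted: "sorted_wrt (\<ge>) lam" and sum: "sum_list lam = n"
    and k: "k < length lam" "0 < lam ! k" and g: "gen_index (remove_box lam k) (n - 1) S d"
  obtains t w where "xvar n ^ k * esym d S = t + xvar n ^ Suc k * w"
    "t \<in> esym_ideal lam n (d + k)" "w \<in> Pring (length lam) n \<inter> deg_less d"
proof -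
  note S = gen_index_pred[OF g]
  have xk: "xvar n ^ k \<in> Pring (length lam) n" "xvar n ^ k \<in> deg_le k"
    using n deg_le_power[OF deg_le_xvar, of n k] by auto
  show ?thesis
  proof (cases "n - card S \<le> lam ! k")
    case True
    then have gi: "esym d (insert n S) \<in> esym_ideal lam n d"
      using esym_in_esym_ideal gen_index_remove_box_insert[OF k sum g] by blast
    show ?thesis
    proof (cases d)
      case 0
      then show ?thesis
        using esym_ideal_mult[OF xk gi] S(1) by (intro that[of _ 0]) (auto simp: add.commute)
    next
      case (Suc d')
      have "xvar n ^ k * esym d S = xvar n ^ k * esym d (insert n S) + xvar n ^ Suc k * (- esym d' S)"
        unfolding Suc esym_insert[OF S(1,2)] by (simp add: algebra_simps)
      moreover have "- esym d' S \<in> Pring (length lam) n \<inter> deg_less d"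
        using S(1,3) esym_deg_le[of S d'] by (simp add: Suc deg_less_Suc)
      ultimately show ?thesis
        using esym_ideal_mult[OF xk gi] by (intro that) (auto simp: add.commute)
    qed
  next
    case False
    then have "lam ! k < n - card S"
      by simp
    note gi = gen_index_remove_box_shift[OF sorted k sum g this]
    have "xvar n ^ k * esym d S - (-1) ^ k * esym (d + k) S \<in> esym_ideal lam n (d + k)"
      using n S gi(2) by (intro esym_ideal_telescope) auto
    moreover have "(-1) ^ k * esym (d + k) S \<in> esym_ideal lam n (d + k)"
      using gi(1) by (rule sign_esym_in_esym_ideal)
    ultimately show ?thesis
      using esym_ideal_add by (intro that[of _ 0]) fastforce+
  qed
qed

lemma xvar_power_esym_ideal_remove_box:
  assumes n: "1 \<le> n" and sorted: "sorted_wrt (\<ge>) lam" and sum: "sum_list lam = n"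
    and k: "k < length lam" "0 < lam ! k"
  shows "t \<in> esym_ideal (remove_box lam k) (n - 1) D \<Longrightarrow> \<exists>t' w. xvar n ^ k * t = t' + xvar n ^ Suc k * w
    \<and> t' \<in> esym_ideal lam n (D + k) \<and> w \<in> Pring (length lam) n \<inter> deg_less D"
proof (induction rule: esym_ideal.induct)
  case zero
  show ?case
    by (intro exI[of _ 0]) simp
next
  case (gen c d S t)
  then obtain t' w where IH: "xvar n ^ k * t = t' + xvar n ^ Suc k * w"
    "t' \<in> esym_ideal lam n (D + k)" "w \<in> Pring (length lam) n \<inter> deg_less D"
    by blast
  obtain t1 w1 where split: "xvar n ^ k * esym d S = t1 + xvar n ^ Suc k * w1"
    "t1 \<in> esym_ideal lam n (d + k)" "w1 \<in> Pring (length lam) n \<inter> deg_less d"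
    using xvar_power_esym_remove_box[OF n sorted sum k gen.hyps(4)] by blast
  have c: "c \<in> Pring (length lam) n" "c \<in> deg_le (D - d)"
    using gen.hyps(1,2) Pring_mono[of "n - 1" n] by auto
  have "c * t1 \<in> esym_ideal lam n (D + k)"
    using esym_ideal_mult[OF c split(2)] gen.hyps(3) by (simp add: add.commute)
  moreover have "c * w1 \<in> deg_less D"
    using deg_le_mult_deg_less[OF c(2)] split(3) gen.hyps(3) by fastforce
  moreover have "xvar n ^ k * (c * esym d S + t) = c * (xvar n ^ k * esym d S) + xvar n ^ k * t"
    by (simp add: algebra_simps)
  then have "xvar n ^ k * (c * esym d S + t) = (c * t1 + t') + xvar n ^ Suc k * (c * w1 + w)"
    unfolding split(1) IH(1) by (simp add: algebra_simps)
  ultimately show ?case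
    using IH c split by (intro exI[of _ "c * t1 + t'"] exI[of _ "c * w1 + w"]) (auto intro: esym_ideal_add)
qed

lemma xmon_split_var:
  fixes m :: "nat \<Rightarrow>\<^sub>0 nat" and i :: nat
  defines "m' \<equiv> Poly_Mapping.update i 0 m"
  shows "xmon m = xvar i ^ Poly_Mapping.lookup m i * xmon m'"
    and "mon_deg m = Poly_Mapping.lookup m i + mon_deg m'"
    and "Poly_Mapping.keys m' = Poly_Mapping.keys m - {i}"
proof -
  have m: "m = Poly_Mapping.single i (Poly_Mapping.lookup m i) + m'"
    by (rule poly_mapping_eqI) (simp add: m'_def lookup_add lookup_update lookup_single when_def)
  show "xmon m = xvar i ^ Poly_Mapping.lookup m i * xmon m'"
    by (subst m) (simp add: xvar_power xmon_mult)
  show "mon_deg m = Poly_Mapping.lookup m i + mon_deg m'"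
    by (subst m) simp
  show "Poly_Mapping.keys m' = Poly_Mapping.keys m - {i}"
    by (simp add: m'_def keys_update)
qed

lemma xmon_in_esym_ideal:
  assumes sum: "sum_list lam = n" and n: "1 \<le> n"
    and m: "Poly_Mapping.keys m \<subseteq> {1..n}" "mon_deg m \<le> D" "eta lam 1 \<le> Poly_Mapping.lookup m n"
  shows "xmon m \<in> esym_ideal lam n D"
proof -
  let ?L = "eta lam 1" and ?e = "Poly_Mapping.lookup m n" and ?m' = "Poly_Mapping.update n 0 m"
  have "Poly_Mapping.keys ?m' \<subseteq> {1..n}"
    using xmon_split_var(3)[where m = m and i = n] m(1) by auto
  then have "xvar n ^ (?e - ?L) * xmon ?m' \<in> Pring (length lam) n \<inter> deg_le (?e - ?L + mon_deg ?m')"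
    using n deg_le_mult[OF deg_le_power[OF deg_le_xvar] deg_le_xmon] by simp
  then have "(xvar n ^ (?e - ?L) * xmon ?m') * xvar n ^ ?L \<in> esym_ideal lam n (?L + (?e - ?L + mon_deg ?m'))"
    by (intro esym_ideal_mult xvar_power_in_esym_ideal[OF sum n]) auto
  moreover have "(xvar n ^ (?e - ?L) * xmon ?m') * xvar n ^ ?L = xmon m"
    using m(3) xmon_split_var(1)[where m = m and i = n]
    by (simp add: mult.commute mult.left_commute flip: power_add)
  moreover have "?L + (?e - ?L + mon_deg ?m') \<le> D"
    using m(2,3) xmon_split_var(2)[where m = m and i = n] by simp
  ultimately show ?thesis
    by (auto elim: esym_ideal_mono)
qed

text \<open>The hypothesis on monomials with a higher power of x_n is supplied by the induction
  in the next lemma.\<close>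
lemma xvar_power_xmon_in_span:
  assumes n: "1 \<le> n" and sorted: "sorted_wrt (\<ge>) lam" and sum: "sum_list lam = n"
    and e: "e < eta lam 1" and B: "(*) (xvar n ^ e) ` Bs \<subseteq> B"
    and span: "Pring (length lam) (n - 1) \<inter> deg_le (mon_deg m')
      \<subseteq> RT_span (length lam) Bs + esym_ideal (remove_box lam e) (n - 1) (mon_deg m')"
    and m': "Poly_Mapping.keys m' \<subseteq> {1..n - 1}" "e + mon_deg m' \<le> D"
    and higher: "\<And>m. Poly_Mapping.keys m \<subseteq> {1..n} \<Longrightarrow> mon_deg m \<le> D \<Longrightarrow> e < Poly_Mapping.lookup m n
      \<Longrightarrow> xmon m \<in> RT_span (length lam) B + esym_ideal lam n D"
  shows "xvar n ^ e * xmon m' \<in> RT_span (length lam) B + esym_ideal lam n D"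
proof -
  let ?l = "length lam" and ?X = "RT_span (length lam) B + esym_ideal lam n D"
  have X: "RT_module ?l ?X"
    by (intro RT_module_set_plus RT_module_RT_span RT_module_esym_ideal)
  have row: "e < length lam" "0 < lam ! e"
    using nonzero_rowsD[OF sorted e] by simp_all
  have "xmon m' \<in> Pring ?l (n - 1) \<inter> deg_le (mon_deg m')"
    using m'(1) by (simp add: deg_le_xmon)
  then obtain s t where st: "xmon m' = s + t" "s \<in> RT_span ?l Bs"
    "t \<in> esym_ideal (remove_box lam e) (n - 1) (mon_deg m')"
    using span by (blast elim: set_plus_elim)
  obtain t' w where tw: "xvar n ^ e * t = t' + xvar n ^ Suc e * w"
    "t' \<in> esym_ideal lam n (mon_deg m' + e)" "w \<in> Pring ?l n" "w \<in> deg_less (mon_deg m')"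
    using xvar_power_esym_ideal_remove_box[OF n sorted sum row st(3)] by blast
  have "xvar n ^ e * s \<in> RT_span ?l B"
    using RT_span_mono[OF RT_span_mult_image[OF st(2)] B] .
  moreover have "t' \<in> esym_ideal lam n D"
    using tw(2) m'(2) by (auto elim: esym_ideal_mono)
  moreover have "w * xvar n ^ Suc e \<in> ?X"
  proof (rule RT_module_mult[OF X tw(3)])
    fix m assume m: "m \<in> Poly_Mapping.keys w"
    have "xmon (m + Poly_Mapping.single n (Suc e)) \<in> ?X"
    proof (rule higher)
      show "Poly_Mapping.keys (m + Poly_Mapping.single n (Suc e)) \<subseteq> {1..n}"
        using Pring_keys[OF tw(3) m] n by (auto simp: keys_add_nat)
      show "mon_deg (m + Poly_Mapping.single n (Suc e)) \<le> D"
        using tw(4) m m'(2) by (auto simp: deg_less_def)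
    qed (simp add: lookup_add)
    then show "xmon m * xvar n ^ Suc e \<in> ?X"
      by (simp only: xvar_power xmon_mult)
  qed
  moreover have "xvar n ^ e * xmon m' = (xvar n ^ e * s + t') + w * xvar n ^ Suc e"
    unfolding st(1) distrib_left tw(1) by (simp add: ac_simps)
  ultimately show ?thesis
    using X set_plus_intro[of "xvar n ^ e * s" _ t'] unfolding RT_module_def by simp
qed

lemma xmon_in_span_plus_esym_ideal:
  assumes n: "1 \<le> n" and sorted: "sorted_wrt (\<ge>) lam" and sum: "sum_list lam = n"
    and span: "\<And>k D. k < eta lam 1 \<Longrightarrow> Pring (length lam) (n - 1) \<inter> deg_le D
      \<subseteq> RT_span (length lam) (Bs k) + esym_ideal (remove_box lam k) (n - 1) D"
  shows "Poly_Mapping.keys m \<subseteq> {1..n} \<Longrightarrow> mon_deg m \<le> D \<Longrightarrow>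
    xmon m \<in> RT_span (length lam) (\<Union>k<eta lam 1. (*) (xvar n ^ k) ` Bs k) + esym_ideal lam n D"
proof (induction "eta lam 1 - Poly_Mapping.lookup m n" arbitrary: m rule: less_induct)
  case (less m)
  let ?e = "Poly_Mapping.lookup m n" and ?m' = "Poly_Mapping.update n 0 m"
  show ?case
  proof (cases "eta lam 1 \<le> ?e")
    case True
    then show ?thesis
      using xmon_in_esym_ideal[OF sum n less.prems] set_plus_intro[OF RT_span.zero] by fastforce
  next
    case False
    then have e: "?e < eta lam 1"
      by simp
    have "xvar n ^ ?e * xmon ?m' \<in> RT_span (length lam) (\<Union>k<eta lam 1. (*) (xvar n ^ k) ` Bs k)
        + esym_ideal lam n D"
    proof (rule xvar_power_xmon_in_span[OF n sorted sum e _ span[OF e]])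
      show "Poly_Mapping.keys ?m' \<subseteq> {1..n - 1}"
        using xmon_split_var(3)[where m = m and i = n] less.prems(1) by auto
      show "?e + mon_deg ?m' \<le> D"
        using xmon_split_var(2)[where m = m and i = n] less.prems(2) by simp
      show "(*) (xvar n ^ ?e) ` Bs ?e \<subseteq> (\<Union>k<eta lam 1. (*) (xvar n ^ k) ` Bs k)"
        using e by (intro UN_upper) simp
      fix m2 assume "Poly_Mapping.keys m2 \<subseteq> {1..n}" "mon_deg m2 \<le> D" "?e < Poly_Mapping.lookup m2 n"
      then show "xmon m2 \<in> RT_span (length lam) (\<Union>k<eta lam 1. (*) (xvar n ^ k) ` Bs k)
        + esym_ideal lam n D"
        using e by (intro less.hyps) auto
    qed
    then show ?thesis
      using xmon_split_var(1)[where m = m and i = n] by simp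
  qed
qed

lemma RT_module_Pring_deg_le_subset:
  assumes "RT_module l X" "\<And>m. Poly_Mapping.keys m \<subseteq> {1..n} \<Longrightarrow> mon_deg m \<le> D \<Longrightarrow> xmon m \<in> X"
  shows "Pring l n \<inter> deg_le D \<subseteq> X"
proof
  fix p assume p: "p \<in> Pring l n \<inter> deg_le D"
  have "p * 1 \<in> X"
  proof (rule RT_module_mult[OF assms(1)])
    show "p \<in> Pring l n"
      using p by simp
    fix m assume "m \<in> Poly_Mapping.keys p"
    then show "xmon m * 1 \<in> X"
      using p Pring_keys[of p l n m] assms(2)[of m] by (simp add: deg_le_def)
  qed
  then show "p \<in> X"
    by simp
qed

lemma Pring_0_subset_RT_span: "Pring l 0 \<subseteq> RT_span l {1}"
proof
  fix p assume "p \<in> Pring l 0"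
  then have "cst (Poly_Mapping.lookup p 0) * 1 + 0 \<in> RT_span l {1}"
    by (intro RT_span.add) (auto simp: Pring_lookup)
  then show "p \<in> RT_span l {1}"
    using Pring_0_eq_cst[OF \<open>p \<in> Pring l 0\<close>] by simp
qed

definition spans_mod_esym_ideal :: "nat list \<Rightarrow> nat \<Rightarrow> mpoly set \<Rightarrow> bool" where
  "spans_mod_esym_ideal lam n B \<longleftrightarrow> finite B \<and> B \<subseteq> Pring (length lam) n \<and>
     (\<forall>D. Pring (length lam) n \<inter> deg_le D \<subseteq> RT_span (length lam) B + esym_ideal lam n D)"

lemma spans_mod_esym_ideal_0: "spans_mod_esym_ideal lam 0 {1}"
  unfolding spans_mod_esym_ideal_def
proof (intro conjI allI subsetI)
  fix D p assume "p \<in> Pring (length lam) 0 \<inter> deg_le D"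
  then have "p + 0 \<in> RT_span (length lam) {1} + esym_ideal lam 0 D"
    using Pring_0_subset_RT_span by (intro set_plus_intro) auto
  then show "p \<in> RT_span (length lam) {1} + esym_ideal lam 0 D"
    by simp
qed auto

lemma spans_mod_esym_ideal_Suc:
  assumes sorted: "sorted_wrt (\<ge>) lam" and sum: "sum_list lam = Suc n"
    and Bs: "\<And>k. k < eta lam 1 \<Longrightarrow> spans_mod_esym_ideal (remove_box lam k) n (Bs k)"
  shows "spans_mod_esym_ideal lam (Suc n) (\<Union>k<eta lam 1. (*) (xvar (Suc n) ^ k) ` Bs k)"
proof -
  let ?l = "length lam" and ?B = "\<Union>k<eta lam 1. (*) (xvar (Suc n) ^ k) ` Bs k"
  have "finite ?B"
    using Bs by (simp add: spans_mod_esym_ideal_def)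
  moreover have "?B \<subseteq> Pring ?l (Suc n)"
  proof (intro UN_least image_subsetI)
    fix k b assume "k \<in> {..<eta lam 1}" "b \<in> Bs k"
    then have "b \<in> Pring ?l (Suc n)"
      using Bs[of k] Pring_mono[of n "Suc n"] by (auto simp: spans_mod_esym_ideal_def)
    then show "xvar (Suc n) ^ k * b \<in> Pring ?l (Suc n)"
      by simp
  qed
  moreover have "Pring ?l (Suc n) \<inter> deg_le D \<subseteq> RT_span ?l ?B + esym_ideal lam (Suc n) D" for D
  proof (rule RT_module_Pring_deg_le_subset)
    show "RT_module ?l (RT_span ?l ?B + esym_ideal lam (Suc n) D)"
      by (intro RT_module_set_plus RT_module_RT_span RT_module_esym_ideal)
    fix m assume "Poly_Mapping.keys m \<subseteq> {1..Suc n}" "mon_deg m \<le> D"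
    moreover have "Pring ?l n \<inter> deg_le D' \<subseteq> RT_span ?l (Bs k) + esym_ideal (remove_box lam k) n D'"
      if "k < eta lam 1" for k D'
      using Bs[OF that] by (simp add: spans_mod_esym_ideal_def)
    ultimately show "xmon m \<in> RT_span ?l ?B + esym_ideal lam (Suc n) D"
      using xmon_in_span_plus_esym_ideal[of "Suc n" lam Bs] sorted sum by simp
  qed
  ultimately show ?thesis
    by (simp add: spans_mod_esym_ideal_def)
qed

lemma spanning_set_mod_esym_ideal:
  "sorted_wrt (\<ge>) lam \<Longrightarrow> sum_list lam = n \<Longrightarrow> \<exists>B. spans_mod_esym_ideal lam n B \<and> card B \<le> multinom n lam"
proof (induction n arbitrary: lam)
  case 0
  then show ?case
    using spans_mod_esym_ideal_0 multinom_mult_fact_prod[OF "0.prems"(2)] by (intro exI[of _ "{1}"]) simp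
next
  case (Suc n)
  let ?L = "eta lam 1"
  have "\<exists>B. spans_mod_esym_ideal (remove_box lam k) n B \<and> card B \<le> multinom n (remove_box lam k)"
    if "k < ?L" for k
  proof -
    have "k < length lam" "0 < lam ! k"
      using nonzero_rowsD[OF Suc.prems(1) that] by simp_all
    then have "sum_list (remove_box lam k) = n"
      using sum_list_remove_box[of k lam] Suc.prems(2) by simp
    then show ?thesis
      by (rule Suc.IH[OF sorted_remove_box])
  qed
  then have "\<forall>k. \<exists>B. k < ?L \<longrightarrow>
      spans_mod_esym_ideal (remove_box lam k) n B \<and> card B \<le> multinom n (remove_box lam k)"
    by blast
  then obtain Bs where "\<forall>k. k < ?L \<longrightarrow>
      spans_mod_esym_ideal (remove_box lam k) n (Bs k) \<and> card (Bs k) \<le> multinom n (remove_box lam k)"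
    by (rule choice_iff[THEN iffD1, THEN exE])
  then have spans: "\<And>k. k < ?L \<Longrightarrow> spans_mod_esym_ideal (remove_box lam k) n (Bs k)"
    and card: "\<And>k. k < ?L \<Longrightarrow> card (Bs k) \<le> multinom n (remove_box lam k)"
    by simp_all
  have "card (\<Union>k<?L. (*) (xvar (Suc n) ^ k) ` Bs k) \<le> (\<Sum>k<?L. card ((*) (xvar (Suc n) ^ k) ` Bs k))"
    by (rule card_UN_le) simp
  also have "\<dots> \<le> (\<Sum>k<?L. card (Bs k))"
    using spans by (intro sum_mono card_image_le) (simp add: spans_mod_esym_ideal_def)
  also have "\<dots> \<le> (\<Sum>k<?L. multinom n (remove_box lam k))"
    using card by (intro sum_mono) simp
  also have "\<dots> = multinom (Suc n) lam"
    using sum_multinom_remove_box[OF Suc.prems] by simp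
  finally show ?case
    using spans_mod_esym_ideal_Suc[OF Suc.prems spans] by blast
qed

section \<open>Deformation to the ideal\<close>

lemma ideal_gen_0 [simp]: "0 \<in> ideal_gen l n G"
  unfolding ideal_gen_def by (intro CollectI exI[of _ 0]) simp

lemma ideal_gen_cons:
  assumes "c \<in> Pring l n" "g \<in> G" "p \<in> ideal_gen l n G"
  shows "c * g + p \<in> ideal_gen l n G"
proof -
  obtain m :: nat and cs gs where p: "\<forall>j<m. cs j \<in> Pring l n \<and> gs j \<in> G" "p = (\<Sum>j<m. cs j * gs j)"
    using assms(3) unfolding ideal_gen_def by blast
  let ?cs = "case_nat c cs" and ?gs = "case_nat g gs"
  have "c * g + p = (\<Sum>j<Suc m. ?cs j * ?gs j)"
    unfolding p(2) sum.lessThan_Suc_shift by simp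
  moreover have "\<forall>j<Suc m. ?cs j \<in> Pring l n \<and> ?gs j \<in> G"
    using assms(1,2) p(1) by (auto simp: less_Suc_eq_0_disj)
  ultimately show ?thesis
    unfolding ideal_gen_def by blast
qed

lemma ideal_gen_add:
  assumes "p \<in> ideal_gen l n G" "q \<in> ideal_gen l n G"
  shows "p + q \<in> ideal_gen l n G"
proof -
  obtain m :: nat and cs gs where p: "\<forall>j<m. cs j \<in> Pring l n \<and> gs j \<in> G" "p = (\<Sum>j<m. cs j * gs j)"
    using assms(1) unfolding ideal_gen_def by blast
  have "(\<Sum>j<k. cs j * gs j) + q \<in> ideal_gen l n G" if "k \<le> m" for k
    using that
  proof (induction k)
    case (Suc k)
    then show ?case
      using ideal_gen_cons[of "cs k" l n "gs k" G] p(1) by (simp add: add.assoc add.left_commute)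
  qed (use assms(2) in simp)
  then show ?thesis
    using p(2) by blast
qed

lemma esym_ideal_reduce:
  assumes "sorted_wrt (\<ge>) lam" "sum_list lam = n"
  shows "t \<in> esym_ideal lam n D \<Longrightarrow>
    \<exists>r \<in> Pring (length lam) n \<inter> deg_less D. t - r \<in> ideal_gen (length lam) n (gens lam n)"
proof (induction rule: esym_ideal.induct)
  case (gen c d S t)
  then obtain r where r: "r \<in> Pring (length lam) n \<inter> deg_less D" "t - r \<in> ideal_gen (length lam) n (gens lam n)"
    by blast
  let ?g = "genpoly lam S (int d)"
  have low: "esym d S - ?g \<in> Pring (length lam) n \<inter> deg_less d"
    by (rule gen_index_esym_minus_genpoly[OF assms gen.hyps(4)])
  have "c * (esym d S - ?g) \<in> deg_less D"
    using deg_le_mult_deg_less[OF gen.hyps(2)] low gen.hyps(3) by fastforce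
  then have "c * (esym d S - ?g) + r \<in> Pring (length lam) n \<inter> deg_less D"
    using gen.hyps(1) low r(1) by simp
  moreover have "c * ?g + (t - r) \<in> ideal_gen (length lam) n (gens lam n)"
    using gen.hyps(1,4) r(2) by (intro ideal_gen_cons genpoly_in_gens)
  ultimately show ?case
    by (intro bexI[of _ "c * (esym d S - ?g) + r"]) (simp_all add: algebra_simps)
qed (intro bexI[of _ 0]; simp)

lemma span_mod_ideal_gen:
  assumes "sorted_wrt (\<ge>) lam" "sum_list lam = n"
    and span: "\<And>D. Pring (length lam) n \<inter> deg_le D \<subseteq> RT_span (length lam) B + esym_ideal lam n D"
    and p: "p \<in> Pring (length lam) n"
  shows "\<exists>q \<in> RT_span (length lam) B. p - q \<in> ideal_gen (length lam) n (gens lam n)"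
proof -
  obtain D where "p \<in> deg_less D"
    using ex_deg_less by blast
  with p show ?thesis
  proof (induction D arbitrary: p)
    case 0
    then show ?case
      by (intro bexI[of _ 0]) (simp_all add: deg_less_0_eq)
  next
    case (Suc D)
    then obtain s t where st: "p = s + t" "s \<in> RT_span (length lam) B" "t \<in> esym_ideal lam n D"
      using span[of D] by (auto simp: deg_less_Suc elim!: set_plus_elim)
    obtain r where r: "r \<in> Pring (length lam) n \<inter> deg_less D"
      "t - r \<in> ideal_gen (length lam) n (gens lam n)"
      using esym_ideal_reduce[OF assms(1,2) st(3)] by blast
    obtain q where q: "q \<in> RT_span (length lam) B" "r - q \<in> ideal_gen (length lam) n (gens lam n)"
      using Suc.IH[of r] r(1) by blast
    have "p - (s + q) = (t - r) + (r - q)"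
      using st(1) by simp
    then have "p - (s + q) \<in> ideal_gen (length lam) n (gens lam n)"
      using ideal_gen_add[OF r(2) q(2)] by (simp only:)
    then show ?case
      using st(2) q(1) by (intro bexI[of _ "s + q"]) (simp_all add: RT_span_add)
  qed
qed

lemma RT_span_as_indexed_sum:
  assumes "finite B" "card B \<le> M"
  obtains b where "\<And>j. j < M \<Longrightarrow> b j \<in> insert 0 B"
    and "\<And>p. p \<in> RT_span l B \<Longrightarrow> \<exists>r. (\<forall>j<M. r j \<in> RT l) \<and> p = (\<Sum>j<M. cst (r j) * b j)"
proof -
  obtain f where f: "bij_betw f {..<card B} B"
    using ex_bij_betw_nat_finite[OF assms(1)] by (auto simp: atLeast0LessThan)
  define b where "b j = (if j < card B then f j else 0)" for j
  show ?thesis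
  proof (rule that)
    show "b j \<in> insert 0 B" for j
      using bij_betw_apply[OF f] by (simp add: b_def)
  next
    fix p assume "p \<in> RT_span l B"
    then obtain r where r: "\<forall>c\<in>B. r c \<in> RT l" "p = (\<Sum>c\<in>B. cst (r c) * c)"
      using RT_span_eq_sum[OF assms(1)] by blast
    define r' where "r' j = (if j < card B then r (f j) else 0)" for j
    have "(\<Sum>j<M. cst (r' j) * b j) = (\<Sum>j<card B. cst (r (f j)) * f j)"
      using assms(2) by (intro sum.mono_neutral_cong_right) (auto simp: r'_def b_def)
    also have "\<dots> = p"
      using sum.reindex_bij_betw[OF f, of "\<lambda>c. cst (r c) * c"] r(2) by simp
    finally show "\<exists>r. (\<forall>j<M. r j \<in> RT l) \<and> p = (\<Sum>j<M. cst (r j) * b j)"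
      using r(1) bij_betw_apply[OF f] by (intro exI[of _ r']) (auto simp: r'_def)
  qed
qed

theorem lemma5p11:
  fixes n :: nat and lam :: "nat list"
  assumes "1 \<le> n" and "is_partition lam n"
  shows "\<exists>b :: nat \<Rightarrow> mpoly.
           (\<forall>j < multinom n lam. b j \<in> Pring (length lam) n) \<and>
           (\<forall>p \<in> Pring (length lam) n. \<exists>r :: nat \<Rightarrow> laur.
               (\<forall>j < multinom n lam. r j \<in> RT (length lam)) \<and>
               p - (\<Sum>j < multinom n lam. cst (r j) * b j)
                 \<in> ideal_gen (length lam) n (gens lam n))"
proof -
  have lam: "sorted_wrt (\<ge>) lam" "sum_list lam = n"
    using assms(2) by (auto simp: is_partition_def)
  obtain B where B: "finite B" "B \<subseteq> Pring (length lam) n" "card B \<le> multinom n lam"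
    and span: "\<And>D. Pring (length lam) n \<inter> deg_le D \<subseteq> RT_span (length lam) B + esym_ideal lam n D"
    using spanning_set_mod_esym_ideal[OF lam] by (auto simp: spans_mod_esym_ideal_def)
  obtain b where b: "\<And>j. j < multinom n lam \<Longrightarrow> b j \<in> insert 0 B"
    and coeffs: "\<And>q. q \<in> RT_span (length lam) B \<Longrightarrow>
      \<exists>r. (\<forall>j<multinom n lam. r j \<in> RT (length lam)) \<and> q = (\<Sum>j<multinom n lam. cst (r j) * b j)"
    using RT_span_as_indexed_sum[OF B(1,3), where l = "length lam"] by blast
  have "\<exists>r. (\<forall>j<multinom n lam. r j \<in> RT (length lam)) \<and>
      p - (\<Sum>j<multinom n lam. cst (r j) * b j) \<in> ideal_gen (length lam) n (gens lam n)"
    if p: "p \<in> Pring (length lam) n" for p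
  proof -
    obtain q where "q \<in> RT_span (length lam) B" "p - q \<in> ideal_gen (length lam) n (gens lam n)"
      using span_mod_ideal_gen[OF lam span p] by blast
    then show ?thesis
      using coeffs by blast
  qed
  moreover have "\<forall>j<multinom n lam. b j \<in> Pring (length lam) n"
    using b B(2) by fastforce
  ultimately show ?thesis
    by blast
qed

end
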